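(* Let $\lambda,s\in\mathbb{C}$ be parameters and consider sequences $(x_n,y_n)$ satisfying the recurrence $$x_n x_{n+1}=\frac{n-y_n}{2y_n^2+2\lambda y_n},\qquad y_n+y_{n-1}=-\frac{2\lambda x_n^2-s x_n-1}{2x_n^2}.$$ This recurrence is equivalent to the discrete Painlevé equation $$\overline{q}+q=p-t-\frac{a_2}{p},\qquad p+\underline{p}=q+t+\frac{a_1}{q},$$ with root variables $a_0,a_1,a_2$ satisfying $a_0+a_1+a_2=1$ and evolving under the step $n\mapsto n+1$ as $\overline{a}_0=a_0$, $\overline{a}_1=a_1-1$, $\overline{a}_2=a_2+1$. The equivalence is given by the change of variables $$x(q,p)=\frac{q}{\sqrt{2}\,(a_1-qp)},\qquad y(q,p)=qp-a_1,\qquad s(t)=\sqrt{2}\,t,$$ with inverse $$q(x,y)=-\sqrt{2}\,xy,\qquad p(x,y)=\frac{n-y}{\sqrt{2}\,xy},\qquad t(s)=\frac{s}{\sqrt{2}},$$ and the parameters are related by $$a_0=1-\lambda,\qquad a_1=-n,\qquad a_2=n+\lambda.$$ That is, setting $q_n=-\sqrt2 x_ny_n$, $p_n=\frac{n-y_n}{\sqrt2 x_ny_n}$, $t=s/\sqrt2$, the pair $(x_n,y_n)$ satisfies the recurrence above if and only if $q_{n+1}+q_n=p_n-t-\frac{n+\lambda}{p_n}$ and $p_n+p_{n-1}=q_n+t-\frac{n}{q_n}$ (whenever all expressions are defined).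
   Context: Here $\overline{q},\underline{p}$ denote the values of $q$ at step $n+1$ and of $p$ at step $n-1$ respectively, while $q,p,a_1,a_2$ are taken at step $n$. Origin of the recurrence: for the weight $w(x)=x^\lambda e^{-x^2+sx}$ on $(0,\infty)$ ($\lambda>-1$, $s\in\mathbb{R}$), with ladder-operator quantities $R_n(s)$, $r_n(s)$, one sets $x_n=1/R_{n-1}(s)$ and $y_n=-r_n(s)$; the theorem itself concerns only the displayed recurrence. The target system is the standard discrete Painlevé equation of type d-$\mathrm{P}(A_2^{(1)}/E_6^{(1)})$ in the normalization of Kajiwara–Noumi–Yamada. *)

theory Defs
  imports Complex_Main
begin

definition q_of :: "complex \<Rightarrow> complex \<Rightarrow> complex" where
  "q_of x y = - complex_of_real (sqrt 2) * x * y"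

definition p_of :: "int \<Rightarrow> complex \<Rightarrow> complex \<Rightarrow> complex" where
  "p_of n x y = (of_int n - y) / (complex_of_real (sqrt 2) * x * y)"

definition t_of :: "complex \<Rightarrow> complex" where
  "t_of s = s / complex_of_real (sqrt 2)"

end

theory Submission
  imports Defs
begin

text \<open>
  Multiplying the q- and p-equations by \<open>\<surd>2\<close> removes the square roots: with
  \<open>a = \<surd>2 p\<^sub>n = (n - y\<^sub>n) / (x\<^sub>n y\<^sub>n)\<close>, \<open>b = 1 / x\<^sub>n\<^sub>+\<^sub>1\<close>, \<open>c = 2 (y\<^sub>n + \<lambda>)\<close> and
  \<open>z = 2 x\<^sub>n\<^sub>+\<^sub>1 y\<^sub>n\<^sub>+\<^sub>1\<close>, the x-equation at \<open>n\<close>, the y-equation at \<open>n + 1\<close>, the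
  q-equation at \<open>n\<close> and the p-equation at \<open>n + 1\<close> become
  \<open>b = c / a\<close>, \<open>z = s + b - c / b\<close>, \<open>z = s - a + c / a\<close> and \<open>z = s + b - a\<close>.
  Either pair amounts to \<open>b = c / a\<close> together with \<open>z = s + b - a\<close>, so the recurrence
  and the discrete Painleve system agree step by step once the equations are paired this way.
\<close>

lemma step_normal_form_iff:
  fixes a b c s z :: "'a::field"
  assumes "a \<noteq> 0" "b \<noteq> 0"
  shows "(b = c / a \<and> z = s + b - c / b) \<longleftrightarrow> (z = s - a + c / a \<and> z = s + b - a)"
proof -
  have "b = c / a \<longleftrightarrow> c / b = a"
    using assms by (auto simp: field_simps)
  then show ?thesis by auto
qed

lemma x_equation_normal_form:
  fixes X Y X' lam m :: "'a::field_char_0"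
  assumes "X \<noteq> 0" "Y \<noteq> 0" "Y + lam \<noteq> 0" "X' \<noteq> 0"
  shows "X * X' = (m - Y) / (2 * Y^2 + 2 * lam * Y)
     \<longleftrightarrow> 1 / X' = 2 * (Y + lam) / ((m - Y) / (X * Y))"
proof -
  have "2 * Y^2 + 2 * lam * Y = 2 * Y * (Y + lam)"
    by (simp add: algebra_simps power2_eq_square)
  then have "X * X' = (m - Y) / (2 * Y^2 + 2 * lam * Y) \<longleftrightarrow> X * X' * (2 * Y * (Y + lam)) = m - Y"
    using assms by (simp add: eq_divide_eq)
  also have "\<dots> \<longleftrightarrow> 1 / X' = 2 * (Y + lam) / ((m - Y) / (X * Y))"
    using assms by (cases "m = Y") (simp, auto simp: field_simps)
  finally show ?thesis .
qed

lemma y_equation_normal_form: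
  fixes X' Y Y' lam s :: "'a::field_char_0"
  assumes "X' \<noteq> 0"
  shows "Y' + Y = - (2 * lam * X'^2 - s * X' - 1) / (2 * X'^2)
     \<longleftrightarrow> 2 * X' * Y' = s + 1 / X' - 2 * (Y + lam) / (1 / X')"
  using assms by (auto simp: field_simps power2_eq_square)

abbreviation sqrt2 :: complex where "sqrt2 \<equiv> complex_of_real (sqrt 2)"

lemma sqrt2_squared: "sqrt2 * sqrt2 = 2"
  by (simp flip: of_real_mult)

lemma sqrt2_times_q_of: "sqrt2 * q_of X Y = - 2 * X * Y"
  unfolding q_of_def by (metis mult.assoc mult_minus_left mult_minus_right sqrt2_squared)

lemma sqrt2_times_p_of: "sqrt2 * p_of n X Y = (of_int n - Y) / (X * Y)"
  unfolding p_of_def by (simp add: mult.assoc)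

lemma sqrt2_times_t_of: "sqrt2 * t_of s = s"
  unfolding t_of_def by simp

lemma sqrt2_times_divide_q_of:
  assumes "X \<noteq> 0" "Y \<noteq> 0"
  shows "sqrt2 * (c / q_of X Y) = - (c / (X * Y))"
  using assms unfolding q_of_def by (simp add: field_simps)

lemma sqrt2_times_divide_p_of:
  assumes "X \<noteq> 0" "Y \<noteq> 0" "Y \<noteq> of_int n"
  shows "sqrt2 * (c / p_of n X Y) = 2 * c / ((of_int n - Y) / (X * Y))"
  using assms sqrt2_squared unfolding p_of_def by (simp add: field_simps)

lemma q_equation_normal_form:
  fixes n :: int and X Y X' Y' lam s :: complex
  assumes "X \<noteq> 0" "Y \<noteq> 0" "Y \<noteq> of_int n"
  shows "q_of X' Y' + q_of X Y = p_of n X Y - t_of s - (of_int n + lam) / p_of n X Y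
     \<longleftrightarrow> 2 * X' * Y' = s - (of_int n - Y) / (X * Y) + 2 * (Y + lam) / ((of_int n - Y) / (X * Y))"
    (is "?q' + ?q = ?p - ?t - ?c / ?p \<longleftrightarrow> _ = s - ?a + _")
proof -
  have "?a \<noteq> 0"
    using assms by simp
  have "?q' + ?q = ?p - ?t - ?c / ?p \<longleftrightarrow> sqrt2 * (?q' + ?q) = sqrt2 * (?p - ?t - ?c / ?p)"
    by simp
  also have "sqrt2 * (?q' + ?q) = - 2 * X' * Y' - 2 * X * Y"
    by (simp add: distrib_left sqrt2_times_q_of)
  also have "sqrt2 * (?p - ?t - ?c / ?p) = ?a - s - 2 * ?c / ?a"
    by (simp only: right_diff_distrib sqrt2_times_p_of sqrt2_times_t_of sqrt2_times_divide_p_of[OF assms])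
  also have "- 2 * X' * Y' - 2 * X * Y = ?a - s - 2 * ?c / ?a
      \<longleftrightarrow> 2 * X' * Y' = s - ?a + 2 * (Y + lam) / ?a"
    using assms \<open>?a \<noteq> 0\<close> by (auto simp: field_simps)
  finally show ?thesis .
qed

lemma p_equation_normal_form:
  fixes n :: int and X Y X' Y' s :: complex
  assumes "X' \<noteq> 0" "Y' \<noteq> 0"
  shows "p_of (n + 1) X' Y' + p_of n X Y = q_of X' Y' + t_of s - of_int (n + 1) / q_of X' Y'
     \<longleftrightarrow> 2 * X' * Y' = s + 1 / X' - (of_int n - Y) / (X * Y)"
    (is "?p' + ?p = ?q' + ?t - ?c / ?q' \<longleftrightarrow> _")
proof -
  have "?p' + ?p = ?q' + ?t - ?c / ?q' \<longleftrightarrow> sqrt2 * (?p' + ?p) = sqrt2 * (?q' + ?t - ?c / ?q')"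
    by simp
  also have "sqrt2 * (?p' + ?p) = (?c - Y') / (X' * Y') + (of_int n - Y) / (X * Y)"
    by (simp add: distrib_left sqrt2_times_p_of)
  also have "sqrt2 * (?q' + ?t - ?c / ?q') = - 2 * X' * Y' + s + ?c / (X' * Y')"
    by (simp only: distrib_left right_diff_distrib diff_minus_eq_add
        sqrt2_times_q_of sqrt2_times_t_of sqrt2_times_divide_q_of[OF assms])
  also have "(?c - Y') / (X' * Y') = ?c / (X' * Y') - 1 / X'"
    using assms by (simp add: diff_divide_distrib)
  finally show ?thesis
    by (auto simp: algebra_simps)
qed

lemma recurrence_step_iff_dP_step:
  fixes n :: int and lam s X Y X' Y' :: complex
  assumes "X \<noteq> 0" "Y \<noteq> 0" "Y + lam \<noteq> 0" "Y \<noteq> of_int n" "X' \<noteq> 0" "Y' \<noteq> 0"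
  shows "(X * X' = (of_int n - Y) / (2 * Y^2 + 2 * lam * Y)
            \<and> Y' + Y = - (2 * lam * X'^2 - s * X' - 1) / (2 * X'^2))
     \<longleftrightarrow> (q_of X' Y' + q_of X Y = p_of n X Y - t_of s - (of_int n + lam) / p_of n X Y
            \<and> p_of (n + 1) X' Y' + p_of n X Y = q_of X' Y' + t_of s - of_int (n + 1) / q_of X' Y')"
  unfolding x_equation_normal_form[OF assms(1-3,5)] y_equation_normal_form[OF assms(5)]
    q_equation_normal_form[OF assms(1,2,4)] p_equation_normal_form[OF assms(5,6)]
  by (rule step_normal_form_iff) (use assms in simp_all)

lemma all_conj_shift_cong:
  fixes P Q R S :: "int \<Rightarrow> bool"
  assumes "\<And>n. P n \<and> Q (n + 1) \<longleftrightarrow> R n \<and> S (n + 1)"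
  shows "(\<forall>n. P n \<and> Q n) \<longleftrightarrow> (\<forall>n. R n \<and> S n)"
proof -
  have shift: "(\<forall>n. A n \<and> B n) \<longleftrightarrow> (\<forall>n. A n \<and> B (n + 1))" for A B :: "int \<Rightarrow> bool"
    by (metis diff_add_cancel)
  show ?thesis
    unfolding shift[of P Q] shift[of R S] using assms by simp
qed

theorem theorem1p1:
  fixes lam s :: complex and x y :: "int \<Rightarrow> complex"
  assumes "\<forall>n. x n \<noteq> 0" and "\<forall>n. y n \<noteq> 0" and "\<forall>n. y n + lam \<noteq> 0"
    and "\<forall>n. y n \<noteq> of_int n"
  shows "(\<forall>n. x n * x (n + 1) = (of_int n - y n) / (2 * (y n)^2 + 2 * lam * y n)
              \<and> y n + y (n - 1) = - (2 * lam * (x n)^2 - s * x n - 1) / (2 * (x n)^2))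
     \<longleftrightarrow>
         (\<forall>n. q_of (x (n + 1)) (y (n + 1)) + q_of (x n) (y n)
                 = p_of n (x n) (y n) - t_of s - (of_int n + lam) / p_of n (x n) (y n)
              \<and> p_of n (x n) (y n) + p_of (n - 1) (x (n - 1)) (y (n - 1))
                 = q_of (x n) (y n) + t_of s - of_int n / q_of (x n) (y n))"
proof (intro all_conj_shift_cong, unfold add_diff_cancel_right', goal_cases)
  case (1 n)
  have "x n \<noteq> 0" "y n \<noteq> 0" "y n + lam \<noteq> 0" "y n \<noteq> of_int n" "x (n + 1) \<noteq> 0" "y (n + 1) \<noteq> 0"
    using assms by auto
  then show ?case
    by (rule recurrence_step_iff_dP_step)
qed

end
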